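(* Let $n\ge 1$ and $N>n$ be integers, let $\lambda>0$, $\beta\in(0,1)$, and let $\tilde b_0\neq 0$ be a real number. Let $\hat\Sigma\in\mathbb{R}^{(n+1)\times(n+1)}$ be a symmetric positive definite Toeplitz matrix, $[\hat\Sigma]_{ts}=\hat r_{|t-s|}$ for $t,s=1,\dots,n+1$. Let $K_{DI}=\mathrm{diag}(\beta,\beta^2,\dots,\beta^{n+1})$ and $v=[1,0,\dots,0]^T\in\mathbb{R}^{n+1}$, and define $$\hat{\mathbf b}_{ML}=[\hat b_0,\hat b_1,\dots,\hat b_n]^T=\tilde b_0^{-1}\left(\hat\Sigma+((N-n)\lambda K_{DI})^{-1}\right)^{-1}v .$$ If the polynomial $\hat b_{ML}(z)=\sum_{k=0}^n \hat b_k z^{-k}$ is not identically zero, then all its zeros lie strictly inside the unit circle, i.e. every (complex) root $\breve z$ of $\hat b_0 z^n+\hat b_1 z^{n-1}+\dots+\hat b_n$ satisfies $|\breve z|<1$.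
   Context: This is the regularized (kernel-based) maximum entropy estimate of the coefficients of a high-order AR model $b(z)y_t=e_t$ with a Gaussian prior $\mathbf b\sim\mathcal N(0,\lambda K_{DI})$ ("diagonal kernel"). In the paper, $\hat r_k=\frac1N\sum_{t=1}^{N-k}y_ty_{t+k}$ are sample covariance lags of data $y_1,\dots,y_N$ and $\tilde b_0$ is a preliminary estimate of $b_0$; for the claim only the stated properties of $\hat\Sigma$ and $\tilde b_0$ are needed. *)

theory Defs
  imports "Jordan_Normal_Form.Matrix"
begin

text \<open>Inverse of a square matrix (meaningful for invertible square matrices).\<close>
definition mat_inv :: "real mat \<Rightarrow> real mat" where
  "mat_inv A = (THE B. B \<in> carrier_mat (dim_row A) (dim_row A) \<and>
       A * B = 1\<^sub>m (dim_row A) \<and> B * A = 1\<^sub>m (dim_row A))"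

definition toeplitz_mat :: "nat \<Rightarrow> (nat \<Rightarrow> real) \<Rightarrow> real mat" where
  "toeplitz_mat m r = mat m m (\<lambda>(t, s). r (if s \<le> t then t - s else s - t))"

definition pos_def_mat :: "real mat \<Rightarrow> bool" where
  "pos_def_mat A \<longleftrightarrow> A \<in> carrier_mat (dim_row A) (dim_row A) \<and> A\<^sup>T = A \<and>
     (\<forall>x \<in> carrier_vec (dim_row A). x \<noteq> 0\<^sub>v (dim_row A) \<longrightarrow> x \<bullet> (A *\<^sub>v x) > 0)"

definition K_DI :: "nat \<Rightarrow> real \<Rightarrow> real mat" where
  "K_DI n \<beta> = mat (n+1) (n+1) (\<lambda>(i, j). if i = j then \<beta> ^ (i+1) else 0)"

definition b_ML :: "nat \<Rightarrow> nat \<Rightarrow> real \<Rightarrow> real \<Rightarrow> real \<Rightarrow> real mat \<Rightarrow> real vec" where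
  "b_ML n N lam \<beta> bt Sig =
     (1 / bt) \<cdot>\<^sub>v (mat_inv (Sig + mat_inv ((real (N - n) * lam) \<cdot>\<^sub>m K_DI n \<beta>)) *\<^sub>v unit_vec (n+1) 0)"

end

theory Submission
  imports Defs "Jordan_Normal_Form.Determinant"
begin

text \<open>Write the estimate as the solution of \<open>(\<Sigma> + D) b = c e\<^sub>0\<close>, where
  \<open>D = ((N - n) \<lambda> K\<^sub>D\<^sub>I)\<^sup>-\<^sup>1 = diag(d\<^sub>0, \<dots>, d\<^sub>n)\<close> has nondecreasing entries because \<open>\<beta> < 1\<close>.
  If \<open>z\<close> is a root, synthetic division gives \<open>b = u - z w\<close>, where \<open>w\<close> is the coefficient
  vector of the quotient shifted down by one place and \<open>u\<close> the same vector unshifted.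
  Since \<open>b\<close> is \<open>(\<Sigma> + D)\<close>-orthogonal to every vector with vanishing first entry,
  \<open>u\<^sup>*(\<Sigma> + D)u = b\<^sup>T(\<Sigma> + D)b + |z|\<^sup>2 w\<^sup>*(\<Sigma> + D)w\<close>. The Toeplitz part takes the same value
  on \<open>u\<close> and on its shift \<open>w\<close>, while the diagonal part can only grow under the shift;
  hence \<open>b\<^sup>T(\<Sigma> + D)b + |z|\<^sup>2 w\<^sup>*(\<Sigma> + D)w \<le> w\<^sup>*(\<Sigma> + D)w\<close>, and positivity of the
  first term forces \<open>|z| < 1\<close>.\<close>

definition lag :: "nat \<Rightarrow> nat \<Rightarrow> nat" where
  "lag i j = (if j \<le> i then i - j else j - i)"

lemma lag_sym: "lag i j = lag j i"
  by (simp add: lag_def)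

lemma lag_Suc_Suc [simp]: "lag (Suc i) (Suc j) = lag i j"
  by (simp add: lag_def)

definition qform :: "nat \<Rightarrow> (nat \<Rightarrow> nat \<Rightarrow> real) \<Rightarrow> (nat \<Rightarrow> real) \<Rightarrow> real" where
  "qform p A x = (\<Sum>i<p. \<Sum>j<p. x i * A i j * x j)"

definition hform :: "nat \<Rightarrow> (nat \<Rightarrow> nat \<Rightarrow> real) \<Rightarrow> (nat \<Rightarrow> complex) \<Rightarrow> complex" where
  "hform p A x = (\<Sum>i<p. \<Sum>j<p. cnj (x i) * of_real (A i j) * x j)"

lemma qform_cong:
  "(\<And>i j. i < p \<Longrightarrow> j < p \<Longrightarrow> A i j = B i j) \<Longrightarrow> (\<And>i. i < p \<Longrightarrow> x i = y i)
    \<Longrightarrow> qform p A x = qform p B y"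
  by (simp add: qform_def)

lemma hform_cong:
  "(\<And>i j. i < p \<Longrightarrow> j < p \<Longrightarrow> A i j = B i j) \<Longrightarrow> (\<And>i. i < p \<Longrightarrow> x i = y i)
    \<Longrightarrow> hform p A x = hform p B y"
  by (simp add: hform_def)

lemma Re_hform: "Re (hform p A x) = qform p A (\<lambda>i. Re (x i)) + qform p A (\<lambda>i. Im (x i))"
  unfolding hform_def qform_def Re_sum sum.distrib[symmetric]
  by (intro sum.cong refl) (simp add: algebra_simps)

lemma hform_of_real: "hform p A (\<lambda>i. of_real (x i)) = of_real (qform p A x)"
  by (simp add: hform_def qform_def)

lemma qform_nonneg:
  assumes "\<And>x. (\<exists>i<p. x i \<noteq> 0) \<Longrightarrow> qform p A x > 0"
  shows "qform p A x \<ge> 0"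
  using assms[of x] by (cases "\<exists>i<p. x i \<noteq> 0") (auto simp: qform_def)

lemma qform_diag: "qform p (\<lambda>i j. if i = j then d i else 0) x = (\<Sum>i<p. d i * (x i)\<^sup>2)"
proof -
  have "qform p (\<lambda>i j. if i = j then d i else 0) x = (\<Sum>i<p. \<Sum>j<p. if i = j then d i * (x i)\<^sup>2 else 0)"
    unfolding qform_def by (intro sum.cong refl) (simp add: power2_eq_square)
  also have "\<dots> = (\<Sum>i<p. d i * (x i)\<^sup>2)"
    by (intro sum.cong refl) simp
  finally show ?thesis .
qed

lemma hform_add_diag:
  "hform p (\<lambda>i j. A i j + (if i = j then d i else 0)) x
     = hform p A x + of_real (\<Sum>i<p. d i * (cmod (x i))\<^sup>2)"
proof -
  have diag: "cnj (x i) * of_real (d i) * x i = of_real (d i * (cmod (x i))\<^sup>2)" for i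
    using complex_norm_square[of "x i"] by (simp add: mult_ac)
  have "hform p (\<lambda>i j. A i j + (if i = j then d i else 0)) x
      = (\<Sum>i<p. \<Sum>j<p. cnj (x i) * of_real (A i j) * x j
                           + (if i = j then cnj (x i) * of_real (d i) * x j else 0))"
    unfolding hform_def by (intro sum.cong refl) (simp add: algebra_simps)
  also have "\<dots> = (\<Sum>i<p. (\<Sum>j<p. cnj (x i) * of_real (A i j) * x j) + of_real (d i * (cmod (x i))\<^sup>2))"
    by (intro sum.cong refl) (simp add: sum.distrib diag)
  finally show ?thesis
    by (simp add: hform_def sum.distrib)
qed

lemma hform_extend_zero: "hform (Suc p) A (\<lambda>i. if i = p then 0 else x i) = hform p A x"
  by (simp add: hform_def)

lemma hform_toeplitz_shift:
  "hform (Suc p) (\<lambda>i j. r (lag i j)) (\<lambda>i. if i = 0 then 0 else x (i - 1))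
     = hform p (\<lambda>i j. r (lag i j)) x"
  unfolding hform_def sum.lessThan_Suc_shift by simp

lemma hform_add_orthogonal:
  fixes b :: "nat \<Rightarrow> real" and w :: "nat \<Rightarrow> complex"
  assumes sym: "\<And>i j. i < p \<Longrightarrow> j < p \<Longrightarrow> A i j = A j i"
    and orth: "\<And>i. 0 < i \<Longrightarrow> i < p \<Longrightarrow> (\<Sum>j<p. A i j * b j) = 0"
    and w0: "w 0 = 0"
  shows "hform p A (\<lambda>i. of_real (b i) + z * w i)
           = of_real (qform p A b) + of_real ((cmod z)\<^sup>2) * hform p A w"
proof -
  have Ab: "w i * of_real (\<Sum>j<p. A i j * b j) = 0" if "i < p" for i
    using orth[OF _ that] w0 by (cases "i = 0") auto
  have cross1: "(\<Sum>i<p. \<Sum>j<p. of_real (b i) * of_real (A i j) * w j) = 0"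
  proof -
    have "(\<Sum>i<p. \<Sum>j<p. of_real (b i) * of_real (A i j) * w j)
        = (\<Sum>j<p. w j * of_real (\<Sum>i<p. A j i * b i))"
      by (subst sum.swap) (auto simp: sum_distrib_left sym algebra_simps intro!: sum.cong)
    also have "\<dots> = 0"
      using Ab by (intro sum.neutral) blast
    finally show ?thesis .
  qed
  have cross2: "(\<Sum>i<p. \<Sum>j<p. cnj (w i) * of_real (A i j) * of_real (b j)) = 0"
  proof -
    have "(\<Sum>i<p. \<Sum>j<p. cnj (w i) * of_real (A i j) * of_real (b j))
        = (\<Sum>i<p. cnj (w i * of_real (\<Sum>j<p. A i j * b j)))"
      by (auto simp: sum_distrib_left algebra_simps intro!: sum.cong)
    also have "\<dots> = 0"
      using Ab by (intro sum.neutral) simp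
    finally show ?thesis .
  qed
  have "hform p A (\<lambda>i. of_real (b i) + z * w i)
      = hform p A (\<lambda>i. of_real (b i))
        + z * (\<Sum>i<p. \<Sum>j<p. of_real (b i) * of_real (A i j) * w j)
        + cnj z * (\<Sum>i<p. \<Sum>j<p. cnj (w i) * of_real (A i j) * of_real (b j))
        + (cnj z * z) * hform p A w"
    unfolding hform_def sum_distrib_left sum.distrib[symmetric]
    by (intro sum.cong refl) (simp add: algebra_simps)
  then show ?thesis
    unfolding cross1 cross2 hform_of_real using complex_norm_square[of z] by (simp add: ac_simps)
qed

lemma horner_root_factor:
  fixes b :: "nat \<Rightarrow> 'a::comm_ring_1" and z :: 'a
  defines "q \<equiv> \<lambda>k. \<Sum>j\<le>k. b j * z ^ (k - j)"
  assumes root: "q n = 0" and "i \<le> n"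
  shows "b i = (if i = n then 0 else q i) - z * (if i = 0 then 0 else q (i - 1))"
proof -
  have q_Suc: "q (Suc k) = b (Suc k) + z * q k" for k
  proof -
    have "z * q k = (\<Sum>j\<le>k. b j * z ^ (Suc k - j))"
      unfolding q_def sum_distrib_left
      by (rule sum.cong) (auto simp: Suc_diff_le algebra_simps)
    then show ?thesis
      by (simp add: q_def)
  qed
  show ?thesis
  proof (cases i)
    case 0
    then show ?thesis
      using root by (auto simp: q_def)
  next
    case (Suc k)
    then show ?thesis
      using root q_Suc[of k] by (auto simp: eq_neg_iff_add_eq_0)
  qed
qed

theorem toeplitz_plus_diag_solution_roots_in_unit_disc:
  fixes r d b :: "nat \<Rightarrow> real" and z :: complex
  defines "A \<equiv> \<lambda>i j. r (lag i j) + (if i = j then d i else 0)"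
  assumes pos: "\<And>x. (\<exists>i<Suc n. x i \<noteq> 0) \<Longrightarrow> qform (Suc n) A x > 0"
    and mono: "\<And>i. i < n \<Longrightarrow> d i \<le> d (Suc i)"
    and orth: "\<And>i. 0 < i \<Longrightarrow> i < Suc n \<Longrightarrow> (\<Sum>j<Suc n. A i j * b j) = 0"
    and nonzero: "\<exists>i<Suc n. b i \<noteq> 0"
    and root: "(\<Sum>k\<le>n. of_real (b k) * z ^ (n - k)) = 0"
  shows "cmod z < 1"
proof -
  define T where "T = (\<lambda>i j. r (lag i j))"
  \<comment> \<open>Horner's partial sums: \<open>q 0, \<dots>, q (n - 1)\<close> are the coefficients of the quotient by \<open>X - z\<close>.\<close>
  define q where "q = (\<lambda>k. \<Sum>j\<le>k. of_real (b j) * z ^ (k - j))"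
  define w where "w = (\<lambda>i. if i = 0 then 0 else q (i - 1))"
  define H where "H = Re (hform (Suc n) A w)"
  have u: "of_real (b i) + z * w i = (if i = n then 0 else q i)" if "i < Suc n" for i
    using horner_root_factor[of "\<lambda>j. of_real (b j)" z n i] root that by (simp add: q_def w_def)
  have "hform (Suc n) A (\<lambda>i. of_real (b i) + z * w i)
      = of_real (qform (Suc n) A b) + of_real ((cmod z)\<^sup>2) * hform (Suc n) A w"
    by (rule hform_add_orthogonal[OF _ orth]) (simp_all add: A_def lag_sym w_def)
  then have u_form: "Re (hform (Suc n) A (\<lambda>i. of_real (b i) + z * w i)) = qform (Suc n) A b + (cmod z)\<^sup>2 * H"
    by (simp add: H_def)
  have "hform (Suc n) A (\<lambda>i. of_real (b i) + z * w i)
      = hform (Suc n) (\<lambda>i j. T i j + (if i = j then d i else 0)) (\<lambda>i. if i = n then 0 else q i)"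
    by (rule hform_cong) (simp_all add: A_def T_def u)
  then have u_split: "Re (hform (Suc n) A (\<lambda>i. of_real (b i) + z * w i))
      = Re (hform n T q) + (\<Sum>i<n. d i * (cmod (q i))\<^sup>2)"
    by (simp add: hform_add_diag hform_extend_zero)
  have w_split: "H = Re (hform n T q) + (\<Sum>i<n. d (Suc i) * (cmod (q i))\<^sup>2)"
    unfolding H_def A_def hform_add_diag w_def T_def hform_toeplitz_shift sum.lessThan_Suc_shift
    by simp
  have "(\<Sum>i<n. d i * (cmod (q i))\<^sup>2) \<le> (\<Sum>i<n. d (Suc i) * (cmod (q i))\<^sup>2)"
    by (intro sum_mono mult_right_mono mono) auto
  then have le: "qform (Suc n) A b + (cmod z)\<^sup>2 * H \<le> H"
    using u_form u_split w_split by linarith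
  have "H \<ge> 0"
    unfolding H_def Re_hform by (simp add: add_nonneg_nonneg qform_nonneg pos)
  moreover have "qform (Suc n) A b > 0"
    using pos nonzero by blast
  ultimately have "(cmod z)\<^sup>2 < 1"
    using le mult_right_mono[of 1 "(cmod z)\<^sup>2" H] by fastforce
  then show ?thesis
    using power_less_imp_less_base[of "cmod z" 2 1] by simp
qed

lemma mat_inv_eqI:
  assumes A: "A \<in> carrier_mat n n" and B: "B \<in> carrier_mat n n"
    and AB: "A * B = 1\<^sub>m n" and BA: "B * A = 1\<^sub>m n"
  shows "mat_inv A = B"
  unfolding mat_inv_def
proof (rule the_equality)
  show "B \<in> carrier_mat (dim_row A) (dim_row A) \<and> A * B = 1\<^sub>m (dim_row A) \<and> B * A = 1\<^sub>m (dim_row A)"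
    using A B AB BA by simp
next
  fix B' assume B': "B' \<in> carrier_mat (dim_row A) (dim_row A) \<and> A * B' = 1\<^sub>m (dim_row A) \<and> B' * A = 1\<^sub>m (dim_row A)"
  have "B' = B' * (A * B)"
    using A B' AB right_mult_one_mat[of B' n n] by simp
  also have "\<dots> = (B' * A) * B"
    using A B B' by (intro assoc_mult_mat[symmetric]) auto
  also have "\<dots> = B"
    using A B B' by simp
  finally show "B' = B" .
qed

lemma mat_inv_mat_diag:
  assumes "\<And>i. i < n \<Longrightarrow> f i \<noteq> 0"
  shows "mat_inv (mat_diag n f) = mat_diag n (\<lambda>i. 1 / f i)"
proof (rule mat_inv_eqI)
  have "mat_diag n (\<lambda>i. f i * (1 / f i)) = 1\<^sub>m n" "mat_diag n (\<lambda>i. 1 / f i * f i) = 1\<^sub>m n"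
    using assms by (auto simp: mat_diag_def intro!: eq_matI)
  then show "mat_diag n f * mat_diag n (\<lambda>i. 1 / f i) = 1\<^sub>m n"
    "mat_diag n (\<lambda>i. 1 / f i) * mat_diag n f = 1\<^sub>m n"
    by simp_all
qed simp_all

lemma smult_K_DI: "c \<cdot>\<^sub>m K_DI n \<beta> = mat_diag (n + 1) (\<lambda>i. c * \<beta> ^ (i + 1))"
  by (auto simp: K_DI_def mat_diag_def intro!: eq_matI)

lemma quadratic_form_eq_qform:
  assumes "A \<in> carrier_mat p p" and "v \<in> carrier_vec p"
  shows "v \<bullet> (A *\<^sub>v v) = qform p (\<lambda>i j. A $$ (i, j)) (\<lambda>i. v $ i)"
  using assms unfolding scalar_prod_def qform_def
  by (auto simp: atLeast0LessThan sum_distrib_left scalar_prod_def row_def algebra_simps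
      intro!: sum.cong)

lemma pos_def_mat_qform_pos:
  assumes "pos_def_mat A" and A: "A \<in> carrier_mat p p" and "\<exists>i<p. x i \<noteq> 0"
  shows "qform p (\<lambda>i j. A $$ (i, j)) x > 0"
proof -
  have "vec p x \<noteq> 0\<^sub>v p"
    using assms(3) by (metis index_vec index_zero_vec(1))
  then have "vec p x \<bullet> (A *\<^sub>v vec p x) > 0"
    using assms unfolding pos_def_mat_def by auto
  then show ?thesis
    using A by (simp add: quadratic_form_eq_qform cong: qform_cong)
qed

lemma pos_def_mat_add_mat_diag:
  fixes S :: "real mat" and d :: "nat \<Rightarrow> real"
  assumes S: "pos_def_mat S" "S \<in> carrier_mat p p" and d: "\<And>i. i < p \<Longrightarrow> d i \<ge> 0"
  shows "pos_def_mat (S + mat_diag p d)"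
  unfolding pos_def_mat_def
proof (intro conjI ballI impI)
  show "S + mat_diag p d \<in> carrier_mat (dim_row (S + mat_diag p d)) (dim_row (S + mat_diag p d))"
    using S by (simp add: mat_diag_def)
  have "(mat_diag p d)\<^sup>T = mat_diag p d"
    by (auto simp: mat_diag_def intro!: eq_matI)
  then show "(S + mat_diag p d)\<^sup>T = S + mat_diag p d"
    using S by (simp add: transpose_add pos_def_mat_def)
  fix x :: "real vec" assume x: "x \<in> carrier_vec (dim_row (S + mat_diag p d))"
    and nz: "x \<noteq> 0\<^sub>v (dim_row (S + mat_diag p d))"
  have xp: "x \<in> carrier_vec p"
    using x S by (simp add: mat_diag_def)
  have "x \<bullet> (mat_diag p d *\<^sub>v x) = qform p (\<lambda>i j. mat_diag p d $$ (i, j)) (\<lambda>i. x $ i)"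
    by (rule quadratic_form_eq_qform[OF mat_diag_dim xp])
  also have "\<dots> = qform p (\<lambda>i j. if i = j then d i else 0) (\<lambda>i. x $ i)"
    by (rule qform_cong) (simp_all add: mat_diag_def)
  also have "\<dots> = (\<Sum>i<p. d i * (x $ i)\<^sup>2)"
    by (rule qform_diag)
  also have "\<dots> \<ge> 0"
    using d by (intro sum_nonneg) simp
  finally have "x \<bullet> (mat_diag p d *\<^sub>v x) \<ge> 0" .
  moreover have "x \<bullet> (S *\<^sub>v x) > 0"
    using S xp nz unfolding pos_def_mat_def by (auto simp: mat_diag_def)
  moreover have "x \<bullet> ((S + mat_diag p d) *\<^sub>v x) = x \<bullet> (S *\<^sub>v x) + x \<bullet> (mat_diag p d *\<^sub>v x)"
    using add_mult_distrib_mat_vec[OF S(2) mat_diag_dim xp]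
      scalar_prod_add_distrib[OF xp mult_mat_vec_carrier[OF S(2) xp] mult_mat_vec_carrier[OF mat_diag_dim xp]]
    by simp
  ultimately show "x \<bullet> ((S + mat_diag p d) *\<^sub>v x) > 0"
    by linarith
qed

lemma pos_def_mat_inverse:
  assumes "pos_def_mat A"
  shows "mat_inv A \<in> carrier_mat (dim_row A) (dim_row A)" and "A * mat_inv A = 1\<^sub>m (dim_row A)"
proof -
  define n where "n = dim_row A"
  have A: "A \<in> carrier_mat n n"
    using assms unfolding pos_def_mat_def n_def by blast
  have "v = 0\<^sub>v n" if "v \<in> carrier_vec n" "A *\<^sub>v v = 0\<^sub>v n" for v
  proof (rule ccontr)
    assume "v \<noteq> 0\<^sub>v n"
    then have "v \<bullet> (A *\<^sub>v v) > 0"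
      using assms that(1) unfolding pos_def_mat_def n_def by blast
    with that show False
      by simp
  qed
  then have "det A \<noteq> 0"
    using det_0_iff_vec_prod_zero_field[OF A] by blast
  from det_non_zero_imp_unit[OF A this, of "()"]
  obtain B where B: "B \<in> carrier_mat n n" "A * B = 1\<^sub>m n" "B * A = 1\<^sub>m n"
    unfolding Units_def by (auto simp: ring_mat_def)
  then show "mat_inv A \<in> carrier_mat (dim_row A) (dim_row A)" "A * mat_inv A = 1\<^sub>m (dim_row A)"
    using mat_inv_eqI[OF A B] by (simp_all add: n_def)
qed

lemma mult_mat_vec_index_sum:
  assumes "A \<in> carrier_mat p q" and "v \<in> carrier_vec q" and "i < p"
  shows "(A *\<^sub>v v) $ i = (\<Sum>j<q. A $$ (i, j) * v $ j)"
  using assms by (simp add: scalar_prod_def row_def atLeast0LessThan mult.commute)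

lemma toeplitz_mat_index: "i < p \<Longrightarrow> j < p \<Longrightarrow> toeplitz_mat p r $$ (i, j) = r (lag i j)"
  by (simp add: toeplitz_mat_def lag_def)

lemma b_ML_linear_system:
  fixes S :: "real mat"
  assumes S: "pos_def_mat S" "S \<in> carrier_mat (n + 1) (n + 1)"
    and "N > n" and "lam > 0" and "\<beta> > 0"
  defines "d \<equiv> \<lambda>i. 1 / (real (N - n) * lam * \<beta> ^ (i + 1))"
  defines "M \<equiv> S + mat_diag (n + 1) d"
  shows "pos_def_mat M" and "b_ML n N lam \<beta> bt S \<in> carrier_vec (n + 1)"
    and "M *\<^sub>v b_ML n N lam \<beta> bt S = (1 / bt) \<cdot>\<^sub>v unit_vec (n + 1) 0"
proof -
  have d_pos: "d i > 0" for i
    using assms(3-5) by (simp add: d_def)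
  show M: "pos_def_mat M"
    unfolding M_def using pos_def_mat_add_mat_diag[OF S] d_pos by (simp add: less_imp_le)
  have M_carrier: "M \<in> carrier_mat (n + 1) (n + 1)"
    using S by (simp add: M_def)
  have "mat_inv ((real (N - n) * lam) \<cdot>\<^sub>m K_DI n \<beta>) = mat_diag (n + 1) d"
    unfolding smult_K_DI d_def by (rule mat_inv_mat_diag) (use assms(3-5) in simp)
  then have "b_ML n N lam \<beta> bt S = (1 / bt) \<cdot>\<^sub>v (mat_inv M *\<^sub>v unit_vec (n + 1) 0)"
    by (simp add: b_ML_def M_def)
  with M_carrier pos_def_mat_inverse[OF M]
  show "b_ML n N lam \<beta> bt S \<in> carrier_vec (n + 1)"
    and "M *\<^sub>v b_ML n N lam \<beta> bt S = (1 / bt) \<cdot>\<^sub>v unit_vec (n + 1) 0"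
    by (simp_all add: mult_mat_vec assoc_mult_mat_vec[symmetric])
qed

theorem proposition1:
  fixes n N :: nat and lam \<beta> bt :: real and r :: "nat \<Rightarrow> real"
  assumes "n \<ge> 1" and "N > n"
    and "lam > 0" and "0 < \<beta>" and "\<beta> < 1" and "bt \<noteq> 0"
    and "pos_def_mat (toeplitz_mat (n+1) r)"
  defines "b \<equiv> b_ML n N lam \<beta> bt (toeplitz_mat (n+1) r)"
  assumes "b \<noteq> 0\<^sub>v (n+1)"
  shows "\<forall>z::complex. (\<Sum>k\<le>n. complex_of_real (b $ k) * z ^ (n - k)) = 0 \<longrightarrow> cmod z < 1"
proof (intro allI impI)
  fix z :: complex
  assume root: "(\<Sum>k\<le>n. complex_of_real (b $ k) * z ^ (n - k)) = 0"
  define d where "d = (\<lambda>i::nat. 1 / (real (N - n) * lam * \<beta> ^ (i + 1)))"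
  define M where "M = toeplitz_mat (n + 1) r + mat_diag (n + 1) d"
  have S: "toeplitz_mat (n + 1) r \<in> carrier_mat (n + 1) (n + 1)"
    by (simp add: toeplitz_mat_def)
  have system: "pos_def_mat M" "b \<in> carrier_vec (n + 1)" "M *\<^sub>v b = (1 / bt) \<cdot>\<^sub>v unit_vec (n + 1) 0"
    unfolding b_def M_def d_def by (rule b_ML_linear_system[OF assms(7) S assms(2-4)])+
  have M: "M \<in> carrier_mat (Suc n) (Suc n)"
    by (simp add: M_def toeplitz_mat_def)
  have M_index: "M $$ (i, j) = r (lag i j) + (if i = j then d i else 0)" if "i < Suc n" "j < Suc n" for i j
    using that by (simp add: M_def toeplitz_mat_index mat_diag_def)
  show "cmod z < 1"
  proof (rule toeplitz_plus_diag_solution_roots_in_unit_disc[of n r d "\<lambda>i. b $ i"])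
    show "qform (Suc n) (\<lambda>i j. r (lag i j) + (if i = j then d i else 0)) x > 0"
      if "\<exists>i<Suc n. x i \<noteq> 0" for x
      using pos_def_mat_qform_pos[OF system(1) M that] by (simp add: M_index cong: qform_cong)
    show "(\<Sum>j<Suc n. (r (lag i j) + (if i = j then d i else 0)) * b $ j) = 0"
      if "0 < i" "i < Suc n" for i
      using system(3) mult_mat_vec_index_sum[OF M, of b i] system(2) that by (simp add: M_index)
    show "d i \<le> d (Suc i)" for i
      using assms(2-5) by (simp add: d_def divide_left_mono mult_left_mono power_decreasing)
    show "\<exists>i<Suc n. b $ i \<noteq> 0"
      using assms(9) system(2) by (auto intro: eq_vecI)
  qed (use root in simp)
qed

end
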